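(* Let $M$ be an $\mathfrak{S}$-module, $\mathfrak{S}=\mathbb{Z}[t]/(t^p-1)$, with $\ker(1-t)=0$. Then $N(t)=0$ on $M$ and $\operatorname{coker}(1-t)$ is a $\mathbb{Z}/p$-vector space. Let $(e_i)_{i\in I}$ be elements of $M$ that represent a $\mathbb{Z}/p$-basis of $\operatorname{coker}(1-t)$. Then the map $\psi\colon\bigoplus_{i\in I}\mathbb{Z}[t]/(N(t))\to M$, $(f_i)_{i\in I}\mapsto\sum_{i\in I}f_i(t)e_i$, is injective, and its cokernel is uniquely $p$-divisible.
   Context: $p$ is a prime and $N(t)=1+t+\dots+t^{p-1}$. Uniquely $p$-divisible means multiplication by $p$ is bijective. *)

theory Defs
  imports "HOL-Computational_Algebra.Polynomial" "HOL-Computational_Algebra.Primes"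
begin

definition zsmult :: "int \<Rightarrow> 'a::ab_group_add \<Rightarrow> 'a" where
  "zsmult k x = (if 0 \<le> k then (\<Sum>i<nat k. x) else - (\<Sum>i<nat (-k). x))"

definition poly_act :: "int poly \<Rightarrow> ('a::ab_group_add \<Rightarrow> 'a) \<Rightarrow> 'a \<Rightarrow> 'a" where
  "poly_act f t x = (\<Sum>k\<le>degree f. zsmult (coeff f k) ((t ^^ k) x))"

definition Npoly :: "nat \<Rightarrow> int poly" where
  "Npoly p = (\<Sum>k<p. monom 1 k)"

text \<open>An S-module, S = Z[t]/(t^p - 1): an abelian group with an additive t, t^p = id.\<close>
definition S_module :: "nat \<Rightarrow> ('a::ab_group_add \<Rightarrow> 'a) \<Rightarrow> bool" where
  "S_module p t \<longleftrightarrow> (\<forall>x y. t (x + y) = t x + t y) \<and> (t ^^ p) = id"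

definition im1t :: "('a::ab_group_add \<Rightarrow> 'a) \<Rightarrow> 'a set" where
  "im1t t = range (\<lambda>y. y - t y)"

end

theory Submission
  imports Defs
begin

(* Write D = 1 - t and N = N(t). Then D N = 1 - t^p acts as 0, and D is injective, so N acts
   as 0. As f - f(1) is divisible by D, f(t) x and f(1) x agree modulo D M; for f = N this
   gives p x \<in> D M.

   The central step is a lifting property of \<psi>: if \<psi>(f) = D z, then \<Sum> f_i(1) e_i lies in
   D M, so p divides every f_i(1) and f_i = D g_i + m_i N; hence \<psi>(f) = D \<psi>(g), and
   injectivity of D gives z = \<psi>(g). Iterating from \<psi>(f) = 0 puts each f_i in the ideal
   (N, D^k) for every k. Since D^(p-1) = N mod p (binomial (p-1) i = (-1)^i mod p), f_i lies
   in (N, p^k) for every k, and as N is monic the remainder of f_i modulo N is divisible by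
   every p^k, hence zero.

   For the cokernel, the spanning property gives M = R + D^n M for every n, and D^(p-1) acts
   as p h(t) because N acts as 0, so M = R + p M. Conversely, if p y \<in> R then
   D^(p-1) y \<in> R, and p - 1 applications of the lifting property give y \<in> R. *)

lemma zsmult_0 [simp]: "zsmult 0 x = 0"
  by (simp add: zsmult_def)

lemma zsmult_succ: "zsmult (k + 1) x = zsmult k x + x"
proof (cases "k \<ge> 0")
  case True
  then have "nat (k + 1) = Suc (nat k)" by simp
  with True show ?thesis by (simp add: zsmult_def)
next
  case False
  then consider "k = -1" | "nat (-k) = Suc (nat (-(k + 1)))" by linarith
  then show ?thesis using False by cases (simp_all add: zsmult_def)
qed

lemma zsmult_pred: "zsmult (k - 1) x = zsmult k x - x"
  using zsmult_succ[of "k - 1" x] by simp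

lemma zsmult_add_left: "zsmult (a + b) x = zsmult a x + zsmult b x"
proof (induction b rule: int_induct[where k = 0])
  case (step1 i)
  then show ?case using zsmult_succ[of "a + i" x] zsmult_succ[of i x] by (simp add: add.assoc)
next
  case (step2 i)
  then show ?case using zsmult_pred[of "a + i" x] zsmult_pred[of i x] by (simp add: diff_add_eq add_diff_eq)
qed simp

lemma zsmult_1 [simp]: "zsmult 1 x = x"
  using zsmult_succ[of 0 x] by simp

lemma zsmult_uminus: "zsmult (- a) x = - zsmult a x"
  using zsmult_add_left[of "- a" a x] by (simp add: eq_neg_iff_add_eq_0)

lemma zsmult_add_right: "zsmult k (x + y) = zsmult k x + zsmult k y"
  by (induction k rule: int_induct[where k = 0]) (simp_all add: zsmult_succ zsmult_pred algebra_simps)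

lemma additive_zsmult_commute:
  assumes "additive h"
  shows "h (zsmult k x) = zsmult k (h x)"
proof -
  interpret additive h by fact
  show ?thesis
    by (induction k rule: int_induct[where k = 0]) (simp_all add: zsmult_succ zsmult_pred add diff zero)
qed

lemma zsmult_diff_left: "zsmult (a - b) x = zsmult a x - zsmult b x"
  using zsmult_add_left[of a "- b" x] by (simp add: zsmult_uminus)

lemma zsmult_zsmult: "zsmult a (zsmult b x) = zsmult (a * b) x"
  by (induction a rule: int_induct[where k = 0])
    (simp_all add: zsmult_add_left zsmult_diff_left distrib_right left_diff_distrib)

interpretation zsmult: module "zsmult :: int \<Rightarrow> 'a::ab_group_add \<Rightarrow> 'a"
  by standard (simp_all add: zsmult_add_left zsmult_add_right zsmult_zsmult)

lemma im1t_iff: "x \<in> im1t t \<longleftrightarrow> (\<exists>y. x = y - t y)"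
  by (auto simp: im1t_def)

lemma poly_act_eq_sum_le:
  assumes "degree f \<le> n"
  shows "poly_act f t x = (\<Sum>k\<le>n. zsmult (coeff f k) ((t ^^ k) x))"
  unfolding poly_act_def
  by (rule sum.mono_neutral_left) (use assms in \<open>auto simp: coeff_eq_0\<close>)

lemma poly_act_0 [simp]: "poly_act 0 t x = 0"
  by (simp add: poly_act_def)

context
  fixes t :: "'a::ab_group_add \<Rightarrow> 'a"
  assumes additive_t: "additive t"
begin

interpretation t: additive t by (fact additive_t)

lemma poly_act_pCons: "poly_act (pCons a f) t x = zsmult a x + t (poly_act f t x)"
proof -
  have "poly_act (pCons a f) t x = (\<Sum>k\<le>Suc (degree f). zsmult (coeff (pCons a f) k) ((t ^^ k) x))"
    by (rule poly_act_eq_sum_le) (simp add: degree_pCons_le)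
  also have "\<dots> = zsmult a x + (\<Sum>k\<le>degree f. zsmult (coeff f k) ((t ^^ Suc k) x))"
    by (subst sum.atMost_Suc_shift) simp
  also have "(\<Sum>k\<le>degree f. zsmult (coeff f k) ((t ^^ Suc k) x)) = t (poly_act f t x)"
    by (simp add: poly_act_def t.sum additive_zsmult_commute[OF additive_t])
  finally show ?thesis .
qed

lemma poly_act_add_right: "poly_act f t (x + y) = poly_act f t x + poly_act f t y"
  by (induction f) (simp_all add: poly_act_pCons zsmult.scale_right_distrib t.add algebra_simps)

lemma additive_poly_act: "additive (poly_act f t)"
  by standard (fact poly_act_add_right)

lemma poly_act_add_left: "poly_act (f + g) t x = poly_act f t x + poly_act g t x"
  by (induction f g rule: poly_induct2)
    (simp_all add: poly_act_pCons zsmult.scale_left_distrib t.add algebra_simps)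

lemma poly_act_smult: "poly_act (smult c f) t x = zsmult c (poly_act f t x)"
  by (induction f)
    (simp_all add: poly_act_pCons zsmult.scale_right_distrib additive_zsmult_commute[OF additive_t])

lemma poly_act_mult: "poly_act (f * g) t x = poly_act f t (poly_act g t x)"
  by (induction f) (simp_all add: poly_act_pCons poly_act_add_left poly_act_smult)

lemma poly_act_const: "poly_act [:c:] t x = zsmult c x"
  by (simp add: poly_act_pCons t.zero)

lemma poly_act_commute: "poly_act f t (t x) = t (poly_act f t x)"
  by (induction f) (simp_all add: poly_act_pCons additive_zsmult_commute[OF additive_t] t.add t.zero)

lemma module_poly_act: "module (\<lambda>f. poly_act f t)"
  by standard
    (simp_all add: poly_act_add_right poly_act_add_left poly_act_mult poly_act_const one_pCons)

lemma poly_act_monom_1: "poly_act (monom 1 k) t x = (t ^^ k) x"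
  by (induction k) (simp_all add: monom_Suc poly_act_pCons poly_act_const monom_0 t.zero)

lemma poly_act_Npoly: "poly_act (Npoly p) t x = (\<Sum>k<p. (t ^^ k) x)"
proof -
  interpret module "\<lambda>f. poly_act f t" by (fact module_poly_act)
  show ?thesis by (simp add: Npoly_def scale_sum_left poly_act_monom_1)
qed

lemma poly_act_one_minus_X: "poly_act [:1, -1:] t x = x - t x"
  by (simp add: poly_act_pCons t.zero t.minus)

lemma poly_act_minus_eval_1_in_im1t: "poly_act f t x - zsmult (poly f 1) x \<in> im1t t"
proof -
  have "poly (f - [:poly f 1:]) 1 = 0" by simp
  then obtain q where "f - [:poly f 1:] = [:-1, 1:] * q"
    unfolding poly_eq_0_iff_dvd by auto
  then have "f - [:poly f 1:] = [:1, -1:] * (- q)" by simp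
  then have "poly_act f t x - zsmult (poly f 1) x = poly_act [:1, -1:] t (poly_act (- q) t x)"
    by (metis poly_act_add_left poly_act_const poly_act_mult diff_add_cancel add_diff_cancel_right')
  then show ?thesis by (auto simp: poly_act_one_minus_X im1t_iff)
qed

end

lemma coeff_Npoly: "coeff (Npoly p) k = (if k < p then 1 else 0)"
  by (simp add: Npoly_def coeff_sum coeff_monom)

lemma poly_Npoly_1: "poly (Npoly p) 1 = int p"
  by (simp add: Npoly_def poly_sum poly_monom)

lemma degree_Npoly: "0 < p \<Longrightarrow> degree (Npoly p) = p - 1"
  by (intro antisym degree_le le_degree) (auto simp: coeff_Npoly)

lemma lead_coeff_Npoly: "0 < p \<Longrightarrow> lead_coeff (Npoly p) = 1"
  by (simp add: degree_Npoly coeff_Npoly)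

lemma decompose_if_dvd_poly_1:
  assumes "int p dvd poly f 1"
  shows "\<exists>g m. f = [:1, -1:] * g + smult m (Npoly p)"
proof -
  obtain m where "poly f 1 = int p * m" using assms by blast
  then have "poly (f - smult m (Npoly p)) 1 = 0" by (simp add: poly_Npoly_1)
  then obtain q where "f - smult m (Npoly p) = [:-1, 1:] * q"
    unfolding poly_eq_0_iff_dvd by auto
  then have "f = [:1, -1:] * (- q) + smult m (Npoly p)"
    by (simp add: algebra_simps)
  then show ?thesis by blast
qed

lemma prime_binomial_alternating_cong:
  assumes "prime p" "i \<le> p - 1"
  shows "int p dvd int ((p - 1) choose i) * (-1) ^ i - 1"
  using assms(2)
proof (induction i)
  case (Suc i)
  have "p choose Suc i = ((p - 1) choose i) + ((p - 1) choose Suc i)"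
    using prime_gt_0_nat[OF assms(1)] binomial_Suc_Suc[of "p - 1" i] by simp
  then have "int ((p - 1) choose Suc i) * (-1) ^ Suc i - 1
      = (int ((p - 1) choose i) * (-1) ^ i - 1) - int (p choose Suc i) * (-1) ^ i"
    by (simp add: algebra_simps)
  also have "int p dvd \<dots>"
  proof (rule dvd_diff)
    have "p dvd p choose Suc i"
      using Suc.prems assms(1) prime_gt_1_nat[OF assms(1)] by (intro dvd_choose_prime) auto
    then show "int p dvd int (p choose Suc i) * (-1) ^ i" by simp
  qed (use Suc in simp)
  finally show ?case .
qed simp

lemma one_minus_X_pow_eq_Npoly_mod_prime:
  assumes "prime p"
  obtains h where "[:1, -1:] ^ (p - 1) = Npoly p + smult (int p) h"
proof -
  define F where "F = [:1::int, -1:] ^ (p - 1) - Npoly p"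
  have "int p dvd coeff F k" for k
  proof (cases "k \<le> p - 1")
    case True
    then have "coeff F k = int ((p - 1) choose k) * (-1) ^ k - 1"
      using prime_gt_0_nat[OF assms] by (simp add: F_def coeff_linear_poly_power coeff_Npoly)
    then show ?thesis using prime_binomial_alternating_cong[OF assms True] by simp
  next
    case False
    have "degree ([:1::int, -1:] ^ (p - 1)) \<le> p - 1"
      using degree_power_le[of "[:1::int, -1:]" "p - 1"] by simp
    with False have "coeff F k = 0"
      by (simp add: F_def coeff_Npoly coeff_eq_0)
    then show ?thesis by simp
  qed
  then have "F = smult (int p) (map_poly (\<lambda>c. c div int p) F)"
    by (intro poly_eqI) (simp add: coeff_map_poly)
  then show ?thesis using that unfolding F_def by (metis diff_eq_eq add.commute)
qed

lemma power_eq_mult_add_mult_power: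
  fixes x n c :: "'a::comm_ring_1"
  assumes "x = n * a + c * h"
  shows "\<exists>a' b. x ^ k = n * a' + c ^ k * b"
proof (induction k)
  case 0
  then show ?case by (metis add_0 mult_1 mult_zero_right power_0)
next
  case (Suc k)
  then obtain a' b where "x ^ k = n * a' + c ^ k * b" by blast
  then have "x ^ Suc k = n * (a * (n * a' + c ^ k * b) + c * h * a') + c ^ Suc k * (h * b)"
    using assms by (simp add: algebra_simps)
  then show ?case by blast
qed

lemma monic_divmod:
  fixes f g :: "'a::idom poly"
  assumes "lead_coeff g = 1"
  obtains q r where "f = g * q + r" "r = 0 \<or> degree r < degree g"
proof -
  have "g \<noteq> 0" using assms by auto
  obtain q r where "pseudo_divmod f g = (q, r)" by fastforce
  from pseudo_divmod[OF \<open>g \<noteq> 0\<close> this] assms show ?thesis by (auto intro: that)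
qed

lemma dvd_degree_less_eq_0:
  fixes g u :: "'a::idom poly"
  assumes "g dvd u" "u = 0 \<or> degree u < degree g"
  shows "u = 0"
  using assms dvd_imp_degree_le by fastforce

lemma monic_dvd_if_dvd_modulo_powers:
  fixes f g :: "'a::factorial_ring_gcd poly" and d :: 'a
  assumes monic: "lead_coeff g = 1" and "\<not> is_unit d"
    and mod_powers: "\<And>k. \<exists>a b. f = g * a + smult (d ^ k) b"
  shows "g dvd f"
proof -
  obtain q r where f: "f = g * q + r" and r: "r = 0 \<or> degree r < degree g"
    using monic_divmod[OF monic] by blast
  have "d ^ k dvd coeff r j" for k j
  proof -
    obtain a b where ab: "f = g * a + smult (d ^ k) b" using mod_powers by blast
    obtain q' r' where b: "b = g * q' + r'" and r': "r' = 0 \<or> degree r' < degree g"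
      using monic_divmod[OF monic] by blast
    have "r - smult (d ^ k) r' = g * (a + smult (d ^ k) q' - q)"
      using f ab b by (simp add: algebra_simps smult_add_right)
    moreover have "r - smult (d ^ k) r' = 0 \<or> degree (r - smult (d ^ k) r') < degree g"
      using r r' by (cases "degree g = 0") (auto intro!: degree_diff_less le_less_trans[OF degree_smult_le])
    ultimately have "r = smult (d ^ k) r'"
      using dvd_degree_less_eq_0 by (metis dvd_triv_left eq_iff_diff_eq_0)
    then show ?thesis by simp
  qed
  then have "coeff r j = 0" for j
    using finite_divisor_powers[OF _ \<open>\<not> is_unit d\<close>, of "coeff r j"] by auto
  then have "r = 0" by (simp add: poly_eq_iff)
  with f show ?thesis by simp
qed

(* poly_comb t e is the map \<psi> of the statement, applied to finitely supported families
   (fin_supp_on); int_comb e is its restriction to constant polynomials. *)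
definition fin_supp_on :: "'i set \<Rightarrow> ('i \<Rightarrow> 'b::zero) \<Rightarrow> bool" where
  "fin_supp_on I f \<longleftrightarrow> finite {i. f i \<noteq> 0} \<and> {i. f i \<noteq> 0} \<subseteq> I"

definition int_comb :: "('i \<Rightarrow> 'a::ab_group_add) \<Rightarrow> ('i \<Rightarrow> int) \<Rightarrow> 'a" where
  "int_comb e c = (\<Sum>i\<in>{i. c i \<noteq> 0}. zsmult (c i) (e i))"

definition poly_comb :: "('a::ab_group_add \<Rightarrow> 'a) \<Rightarrow> ('i \<Rightarrow> 'a) \<Rightarrow> ('i \<Rightarrow> int poly) \<Rightarrow> 'a" where
  "poly_comb t e f = (\<Sum>i\<in>{i. f i \<noteq> 0}. poly_act (f i) t (e i))"

lemma fin_supp_on_mono: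
  "fin_supp_on I f \<Longrightarrow> {i. g i \<noteq> 0} \<subseteq> {i. f i \<noteq> 0} \<Longrightarrow> fin_supp_on I g"
  unfolding fin_supp_on_def by (meson finite_subset order_trans)

lemma poly_comb_eq_sum:
  assumes "finite S" "{i. f i \<noteq> 0} \<subseteq> S"
  shows "poly_comb t e f = (\<Sum>i\<in>S. poly_act (f i) t (e i))"
  unfolding poly_comb_def by (rule sum.mono_neutral_left) (use assms in auto)

lemma int_comb_eq_sum:
  assumes "finite S" "{i. c i \<noteq> 0} \<subseteq> S"
  shows "int_comb e c = (\<Sum>i\<in>S. zsmult (c i) (e i))"
  unfolding int_comb_def by (rule sum.mono_neutral_left) (use assms in auto)

lemma poly_comb_add:
  assumes "additive t" "finite {i. f i \<noteq> 0}" "finite {i. g i \<noteq> 0}"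
  shows "poly_comb t e (\<lambda>i. f i + g i) = poly_comb t e f + poly_comb t e g"
proof -
  let ?S = "{i. f i \<noteq> 0} \<union> {i. g i \<noteq> 0}"
  have "poly_comb t e (\<lambda>i. f i + g i) = (\<Sum>i\<in>?S. poly_act (f i + g i) t (e i))"
    by (rule poly_comb_eq_sum) (use assms in auto)
  also have "\<dots> = (\<Sum>i\<in>?S. poly_act (f i) t (e i)) + (\<Sum>i\<in>?S. poly_act (g i) t (e i))"
    by (simp add: poly_act_add_left[OF assms(1)] sum.distrib)
  also have "\<dots> = poly_comb t e f + poly_comb t e g"
    using assms by (simp add: poly_comb_eq_sum[of ?S f] poly_comb_eq_sum[of ?S g])
  finally show ?thesis .
qed

lemma poly_comb_mult:
  assumes "additive t" "finite {i. f i \<noteq> 0}"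
  shows "poly_comb t e (\<lambda>i. h * f i) = poly_act h t (poly_comb t e f)"
proof -
  have "poly_comb t e (\<lambda>i. h * f i) = (\<Sum>i | f i \<noteq> 0. poly_act (h * f i) t (e i))"
    by (rule poly_comb_eq_sum) (use assms in auto)
  then show ?thesis
    by (simp add: poly_comb_def poly_act_mult[OF assms(1)] additive.sum[OF additive_poly_act[OF assms(1)]])
qed

locale fixed_point_free_S_module =
  fixes p :: nat and t :: "'a::ab_group_add \<Rightarrow> 'a"
  assumes prime: "prime p"
    and S_module: "S_module p t"
    and fixed_point_free: "\<And>x. x - t x = 0 \<Longrightarrow> x = 0"
begin

lemma additive_t: "additive t"
  using S_module by (simp add: S_module_def additive_def)

sublocale t: additive t
  by (fact additive_t)

sublocale Zt: module "\<lambda>f. poly_act f t"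
  by (fact module_poly_act[OF additive_t])

lemma subspace_im1t: "Zt.subspace (im1t t)"
proof (rule Zt.subspaceI)
  show "0 \<in> im1t t"
    unfolding im1t_iff by (auto intro: exI[of _ 0] simp: t.zero)
  show "x + y \<in> im1t t" if "x \<in> im1t t" "y \<in> im1t t" for x y
  proof -
    from that obtain a b where "x = a - t a" "y = b - t b" unfolding im1t_iff by blast
    then have "x + y = (a + b) - t (a + b)" by (simp add: t.add)
    then show ?thesis unfolding im1t_iff by blast
  qed
  show "poly_act c t x \<in> im1t t" if "x \<in> im1t t" for c x
  proof -
    from that obtain a where "x = a - t a" unfolding im1t_iff by blast
    then have "poly_act c t x = poly_act c t a - t (poly_act c t a)"
      by (simp add: Zt.scale_right_diff_distrib poly_act_commute[OF additive_t])
    then show ?thesis unfolding im1t_iff by blast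
  qed
qed

lemma sum_powers_eq_0: "(\<Sum>k<p. (t ^^ k) x) = 0"
proof (rule fixed_point_free)
  have "(\<Sum>k<p. (t ^^ k) x) - t (\<Sum>k<p. (t ^^ k) x) = (\<Sum>k<p. (t ^^ k) x - (t ^^ Suc k) x)"
    by (simp add: t.sum sum_subtractf)
  also have "\<dots> = x - (t ^^ p) x"
    by (subst sum_lessThan_telescope') simp
  also have "\<dots> = 0"
    using S_module by (simp add: S_module_def)
  finally show "(\<Sum>k<p. (t ^^ k) x) - t (\<Sum>k<p. (t ^^ k) x) = 0" .
qed

lemma poly_act_Npoly_eq_0: "poly_act (Npoly p) t x = 0"
  by (simp add: poly_act_Npoly[OF additive_t] sum_powers_eq_0)

lemma zsmult_p_in_im1t: "zsmult (int p) x \<in> im1t t"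
  using Zt.subspace_neg[OF subspace_im1t poly_act_minus_eval_1_in_im1t[OF additive_t, of "Npoly p" x]]
  by (simp add: poly_act_Npoly_eq_0 poly_Npoly_1)

lemma poly_act_one_minus_X_pow:
  obtains h where "\<And>y. poly_act ([:1, -1:] ^ (p - 1)) t y = poly_act h t (zsmult (int p) y)"
proof -
  obtain h where "[:1, -1:] ^ (p - 1) = Npoly p + smult (int p) h"
    using one_minus_X_pow_eq_Npoly_mod_prime[OF prime] .
  then have "poly_act ([:1, -1:] ^ (p - 1)) t y = poly_act h t (zsmult (int p) y)" for y
    by (simp add: poly_act_add_left[OF additive_t] poly_act_smult[OF additive_t]
        poly_act_Npoly_eq_0 additive_zsmult_commute[OF additive_poly_act[OF additive_t]])
  then show ?thesis by (rule that)
qed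

end

(* span and indep say that the e_i represent a Z/p-basis of the cokernel of 1 - t. *)
locale coker_basis = fixed_point_free_S_module +
  fixes I :: "'i set" and e :: "'i \<Rightarrow> 'a"
  assumes span: "\<And>x. \<exists>c. fin_supp_on I c \<and> x - int_comb e c \<in> im1t t"
    and indep: "\<And>c i. fin_supp_on I c \<Longrightarrow> int_comb e c \<in> im1t t \<Longrightarrow> i \<in> I \<Longrightarrow> int p dvd c i"
begin

definition gen_submodule :: "'a set" where
  "gen_submodule = poly_comb t e ` {f. fin_supp_on I f}"

lemma eval_1_dvd_if_poly_comb_in_im1t:
  assumes f: "fin_supp_on I f" and im: "poly_comb t e f \<in> im1t t"
  shows "int p dvd poly (f i) 1"
proof -
  define S where "S = {i. f i \<noteq> 0}"
  define c where "c i = poly (f i) 1" for i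
  have S: "finite S" "S \<subseteq> I" and cS: "{i. c i \<noteq> 0} \<subseteq> S"
    using f by (auto simp: fin_supp_on_def S_def c_def)
  have "poly_comb t e f - int_comb e c = (\<Sum>i\<in>S. poly_act (f i) t (e i) - zsmult (c i) (e i))"
    by (simp add: poly_comb_def int_comb_eq_sum[OF S(1) cS] S_def sum_subtractf)
  also have "\<dots> \<in> im1t t"
    by (intro Zt.subspace_sum[OF subspace_im1t]) (simp add: c_def poly_act_minus_eval_1_in_im1t[OF additive_t])
  finally have "poly_comb t e f - int_comb e c \<in> im1t t" .
  from Zt.subspace_diff[OF subspace_im1t im this] have "int_comb e c \<in> im1t t"
    by simp
  moreover have "fin_supp_on I c"
    using f cS by (auto simp: fin_supp_on_def S_def intro: finite_subset)
  ultimately show ?thesis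
  proof (cases "i \<in> I")
    case False
    with S(2) have "f i = 0" by (auto simp: S_def)
    then show ?thesis by simp
  qed (use indep[of c i] in \<open>simp add: c_def\<close>)
qed

lemma poly_comb_lift:
  assumes f: "fin_supp_on I f" and z: "poly_comb t e f = z - t z"
  obtains g where "fin_supp_on I g" "\<And>i. \<exists>m. f i = [:1, -1:] * g i + smult m (Npoly p)"
    "poly_comb t e g = z"
proof -
  have "\<exists>g m. (f i = 0 \<longrightarrow> g = 0) \<and> f i = [:1, -1:] * g + smult m (Npoly p)" for i
  proof (cases "f i = 0")
    case False
    have "int p dvd poly (f i) 1"
      using eval_1_dvd_if_poly_comb_in_im1t[OF f] z unfolding im1t_iff by blast
    with False show ?thesis using decompose_if_dvd_poly_1 by blast
  qed (auto intro: exI[of _ 0])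
  then obtain g m where gm: "\<And>i. f i = 0 \<longrightarrow> g i = 0" "\<And>i. f i = [:1, -1:] * g i + smult (m i) (Npoly p)"
    by metis
  define S where "S = {i. f i \<noteq> 0}"
  have S: "finite S" and gS: "{i. g i \<noteq> 0} \<subseteq> S"
    using f gm(1) by (auto simp: fin_supp_on_def S_def)
  have "poly_act (f i) t (e i) = poly_act (g i) t (e i) - t (poly_act (g i) t (e i))" for i
    unfolding gm(2)[of i] poly_act_add_left[OF additive_t] poly_act_mult[OF additive_t]
      poly_act_smult[OF additive_t] poly_act_one_minus_X[OF additive_t] poly_act_Npoly_eq_0
    by simp
  then have "poly_comb t e f = (\<Sum>i\<in>S. poly_act (g i) t (e i) - t (poly_act (g i) t (e i)))"
    by (simp add: poly_comb_def S_def)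
  also have "\<dots> = poly_comb t e g - t (poly_comb t e g)"
    by (simp add: poly_comb_eq_sum[OF S gS] t.sum sum_subtractf)
  finally have "(z - poly_comb t e g) - t (z - poly_comb t e g) = 0"
    using z by (simp add: t.diff algebra_simps)
  then have "poly_comb t e g = z"
    using fixed_point_free by fastforce
  moreover have "fin_supp_on I g"
    using fin_supp_on_mono[OF f] gm(1) by blast
  ultimately show ?thesis using gm(2) that by blast
qed

lemma mod_one_minus_X_pow_if_poly_comb_eq_0:
  assumes "fin_supp_on I f" "poly_comb t e f = 0"
  shows "\<exists>a b. f i = Npoly p * a + [:1, -1:] ^ k * b"
  using assms
proof (induction k arbitrary: f)
  case 0
  show ?case by (rule exI[of _ 0]) simp
next
  case (Suc k)
  then have "poly_comb t e f = 0 - t 0" by (simp add: t.zero)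
  obtain g where g: "fin_supp_on I g" and fg: "\<And>i. \<exists>m. f i = [:1, -1:] * g i + smult m (Npoly p)"
    and g0: "poly_comb t e g = 0"
    using poly_comb_lift[OF Suc.prems(1) \<open>poly_comb t e f = 0 - t 0\<close>] by blast
  obtain a b where ab: "g i = Npoly p * a + [:1, -1:] ^ k * b" using Suc.IH[OF g g0] by blast
  obtain m where fi: "f i = [:1, -1:] * g i + smult m (Npoly p)" using fg[of i] by blast
  have "d * (n * a + d ^ k * b) + smult m n = n * (d * a + [:m:]) + d ^ Suc k * b" for d n :: "int poly"
    by (simp add: algebra_simps)
  then have "f i = Npoly p * ([:1, -1:] * a + [:m:]) + [:1, -1:] ^ Suc k * b"
    unfolding fi ab .
  then show ?case by blast
qed

lemma Npoly_dvd_if_poly_comb_eq_0: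
  assumes "fin_supp_on I f" "poly_comb t e f = 0"
  shows "Npoly p dvd f i"
proof (rule monic_dvd_if_dvd_modulo_powers)
  show "lead_coeff (Npoly p) = 1"
    using prime_gt_0_nat[OF prime] by (rule lead_coeff_Npoly)
  show "\<not> is_unit (int p)"
    using prime_gt_1_nat[OF prime] by simp
  fix k
  obtain h where "[:1, -1:] ^ (p - 1) = Npoly p + smult (int p) h"
    using one_minus_X_pow_eq_Npoly_mod_prime[OF prime] .
  then have "[:1, -1:] ^ (p - 1) = Npoly p * 1 + [:int p:] * h"
    by simp
  then obtain a' b' where pow: "([:1, -1:] ^ (p - 1)) ^ k = Npoly p * a' + [:int p:] ^ k * b'"
    using power_eq_mult_add_mult_power by blast
  obtain a b where fi: "f i = Npoly p * a + ([:1, -1:] ^ (p - 1)) ^ k * b"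
    using mod_one_minus_X_pow_if_poly_comb_eq_0[OF assms, of i "(p - 1) * k"]
    unfolding power_mult by blast
  have "n * a + (n * a' + c * b') * b = n * (a + a' * b) + c * (b' * b)" for n c :: "int poly"
    by (simp add: algebra_simps)
  then have "f i = Npoly p * (a + a' * b) + [:int p:] ^ k * (b' * b)"
    unfolding fi pow .
  then show "\<exists>a b. f i = Npoly p * a + smult (int p ^ k) b"
    by (auto simp: poly_const_pow)
qed

lemma poly_comb_in_gen_submodule: "fin_supp_on I f \<Longrightarrow> poly_comb t e f \<in> gen_submodule"
  by (simp add: gen_submodule_def)

lemma gen_submoduleE:
  assumes "x \<in> gen_submodule"
  obtains f where "fin_supp_on I f" "poly_comb t e f = x"
  using assms by (auto simp: gen_submodule_def)

lemma subspace_gen_submodule: "Zt.subspace gen_submodule"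
proof (rule Zt.subspaceI)
  have "fin_supp_on I (\<lambda>_. 0 :: int poly)"
    by (simp add: fin_supp_on_def)
  from poly_comb_in_gen_submodule[OF this] show "0 \<in> gen_submodule"
    by (simp add: poly_comb_def)
next
  fix x y assume "x \<in> gen_submodule" "y \<in> gen_submodule"
  then obtain f g where f: "fin_supp_on I f" "poly_comb t e f = x"
    and g: "fin_supp_on I g" "poly_comb t e g = y"
    by (meson gen_submoduleE)
  have "{i. f i + g i \<noteq> 0} \<subseteq> {i. f i \<noteq> 0} \<union> {i. g i \<noteq> 0}"
    by auto
  with f(1) g(1) have "fin_supp_on I (\<lambda>i. f i + g i)"
    unfolding fin_supp_on_def by (blast intro: finite_subset)
  from poly_comb_in_gen_submodule[OF this] show "x + y \<in> gen_submodule"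
    using f g by (simp add: poly_comb_add[OF additive_t] fin_supp_on_def)
next
  fix h x assume "x \<in> gen_submodule"
  then obtain f where f: "fin_supp_on I f" "poly_comb t e f = x"
    by (rule gen_submoduleE)
  have "fin_supp_on I (\<lambda>i. h * f i)"
    by (rule fin_supp_on_mono[OF f(1)]) auto
  from poly_comb_in_gen_submodule[OF this] show "poly_act h t x \<in> gen_submodule"
    using f by (simp add: poly_comb_mult[OF additive_t] fin_supp_on_def)
qed

lemma int_comb_in_gen_submodule:
  assumes "fin_supp_on I c"
  shows "int_comb e c \<in> gen_submodule"
proof -
  have "fin_supp_on I (\<lambda>i. [:c i:])"
    using assms by (simp add: fin_supp_on_def)
  from poly_comb_in_gen_submodule[OF this] show ?thesis
    by (simp add: poly_comb_def int_comb_def poly_act_const[OF additive_t])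
qed

lemma decompose_mod_one_minus_X_pow:
  "\<exists>r y. r \<in> gen_submodule \<and> x = r + poly_act ([:1, -1:] ^ n) t y"
proof (induction n arbitrary: x)
  case 0
  show ?case
    using Zt.subspace_0[OF subspace_gen_submodule] by (auto simp: Zt.scale_one)
next
  case (Suc n)
  obtain r y where r: "r \<in> gen_submodule" and x: "x = r + poly_act ([:1, -1:] ^ n) t y"
    using Suc.IH by blast
  obtain c u where c: "fin_supp_on I c" and "y - int_comb e c = u - t u"
    using span[of y] unfolding im1t_iff by blast
  then have "y = int_comb e c + poly_act [:1, -1:] t u"
    by (simp add: poly_act_one_minus_X[OF additive_t] algebra_simps)
  then have "x = (r + poly_act ([:1, -1:] ^ n) t (int_comb e c)) + poly_act ([:1, -1:] ^ Suc n) t u"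
    by (simp add: x Zt.scale_right_distrib Zt.scale_scale power_Suc2 add.assoc)
  moreover have "r + poly_act ([:1, -1:] ^ n) t (int_comb e c) \<in> gen_submodule"
    by (intro Zt.subspace_add[OF subspace_gen_submodule] r
        Zt.subspace_scale[OF subspace_gen_submodule] int_comb_in_gen_submodule c)
  ultimately show ?case by blast
qed

lemma exists_p_multiple_mod_gen_submodule: "\<exists>y. x - zsmult (int p) y \<in> gen_submodule"
proof -
  obtain h where h: "\<And>y. poly_act ([:1, -1:] ^ (p - 1)) t y = poly_act h t (zsmult (int p) y)"
    using poly_act_one_minus_X_pow by blast
  obtain r y where "r \<in> gen_submodule" "x = r + poly_act ([:1, -1:] ^ (p - 1)) t y"
    using decompose_mod_one_minus_X_pow by blast
  moreover have "poly_act ([:1, -1:] ^ (p - 1)) t y = zsmult (int p) (poly_act h t y)"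
    unfolding h by (rule additive_zsmult_commute[OF additive_poly_act[OF additive_t]])
  ultimately have "x - zsmult (int p) (poly_act h t y) \<in> gen_submodule"
    by simp
  then show ?thesis ..
qed

lemma in_gen_submodule_if_one_minus_X_pow:
  "poly_act ([:1, -1:] ^ n) t y \<in> gen_submodule \<Longrightarrow> y \<in> gen_submodule"
proof (induction n arbitrary: y)
  case 0
  then show ?case by (simp add: Zt.scale_one)
next
  case (Suc n)
  then have "poly_act ([:1, -1:] ^ n) t (poly_act [:1, -1:] t y) \<in> gen_submodule"
    by (simp only: power_Suc2 Zt.scale_scale[symmetric])
  then have "poly_act [:1, -1:] t y \<in> gen_submodule"
    by (rule Suc.IH)
  then obtain f where f: "fin_supp_on I f" "poly_comb t e f = y - t y"
    by (auto simp: poly_act_one_minus_X[OF additive_t] elim: gen_submoduleE)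
  obtain g where "fin_supp_on I g" "poly_comb t e g = y"
    using poly_comb_lift[OF f] by blast
  then show ?case
    using poly_comb_in_gen_submodule by blast
qed

lemma in_gen_submodule_if_p_multiple:
  assumes "zsmult (int p) y \<in> gen_submodule"
  shows "y \<in> gen_submodule"
proof (rule in_gen_submodule_if_one_minus_X_pow)
  obtain h where "\<And>y. poly_act ([:1, -1:] ^ (p - 1)) t y = poly_act h t (zsmult (int p) y)"
    using poly_act_one_minus_X_pow by blast
  then show "poly_act ([:1, -1:] ^ (p - 1)) t y \<in> gen_submodule"
    using Zt.subspace_scale[OF subspace_gen_submodule assms] by simp
qed

end

theorem lemma6p7:
  fixes p :: nat and t :: "'a::ab_group_add \<Rightarrow> 'a"
    and I :: "'i set" and e :: "'i \<Rightarrow> 'a"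
  assumes "prime p"
    and "S_module p t"
    and ker: "\<And>x. x - t x = 0 \<Longrightarrow> x = 0"
    and span: "\<forall>x. \<exists>c :: 'i \<Rightarrow> int. finite {i. c i \<noteq> 0} \<and> {i. c i \<noteq> 0} \<subseteq> I \<and>
                 x - (\<Sum>i\<in>{i. c i \<noteq> 0}. zsmult (c i) (e i)) \<in> im1t t"
    and indep: "\<forall>c :: 'i \<Rightarrow> int. finite {i. c i \<noteq> 0} \<and> {i. c i \<noteq> 0} \<subseteq> I \<and>
                 (\<Sum>i\<in>{i. c i \<noteq> 0}. zsmult (c i) (e i)) \<in> im1t t
                 \<longrightarrow> (\<forall>i\<in>I. int p dvd c i)"
  shows "(\<forall>x. (\<Sum>k<p. (t ^^ k) x) = 0)
    \<and> (\<forall>x. zsmult (int p) x \<in> im1t t)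
    \<and> (\<forall>f :: 'i \<Rightarrow> int poly. finite {i. f i \<noteq> 0} \<and> {i. f i \<noteq> 0} \<subseteq> I \<and>
          (\<Sum>i\<in>{i. f i \<noteq> 0}. poly_act (f i) t (e i)) = 0
          \<longrightarrow> (\<forall>i\<in>I. Npoly p dvd f i))
    \<and> (let R = {(\<Sum>i\<in>{i. f i \<noteq> 0}. poly_act (f i) t (e i)) | f :: 'i \<Rightarrow> int poly.
                 finite {i. f i \<noteq> 0} \<and> {i. f i \<noteq> 0} \<subseteq> I}
       in (\<forall>x. \<exists>y. x - zsmult (int p) y \<in> R) \<and>
          (\<forall>y. zsmult (int p) y \<in> R \<longrightarrow> y \<in> R))"
proof -
  interpret coker_basis p t I e
    using assms by unfold_locales (auto simp: fin_supp_on_def int_comb_def)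
  have "{(\<Sum>i\<in>{i. f i \<noteq> 0}. poly_act (f i) t (e i)) | f :: 'i \<Rightarrow> int poly.
          finite {i. f i \<noteq> 0} \<and> {i. f i \<noteq> 0} \<subseteq> I} = gen_submodule"
    by (auto simp: gen_submodule_def poly_comb_def fin_supp_on_def)
  then show ?thesis
    using sum_powers_eq_0 zsmult_p_in_im1t Npoly_dvd_if_poly_comb_eq_0
      exists_p_multiple_mod_gen_submodule in_gen_submodule_if_p_multiple
    by (auto simp: Let_def fin_supp_on_def poly_comb_def)
qed

end
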